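(* Let $k\ge 0$ be an integer and let $T$ be the tree on $3k+4$ vertices obtained by taking $k+1$ disjoint copies of the star $K_{1,3}$ and identifying one leaf from each copy into a single vertex. Then $Z(T)=k+2$ and $Z_k(T)=k+1$.
   Context: Filling rule: if a filled vertex has exactly one unfilled neighbor (and any number of filled neighbors), that neighbor becomes filled; "applying the filling rule in a subgraph $H$" means applying it with neighborhoods taken in $H$. The $Z_q$-Game on $G$ ($q\ge 0$ an integer): initially all vertices are unfilled; a player repeatedly performs one of the following operations until all vertices are filled: (1) for one token, change any vertex from unfilled to filled; (2) at no cost, apply the filling rule in $G$; (3) if $F$ is the current set of filled vertices and $U_1,\dots,U_k$ are the vertex sets of the connected components of $G[V(G)\setminus F]$ with $k\ge q+1$, the player announces a selection of at least $q+1$ of the $U_i$ to an oracle (an adversary), the oracle returns a nonempty subset $\{U_{i_1},\dots,U_{i_\ell}\}$ of the selected components, and the player may at no cost apply the filling rule in $G[F\cup U_{i_1}\cup\cdots\cup U_{i_\ell}]$. $Z_q(G)$ is the minimum number of tokens with which the player can guarantee that all vertices become filled, regardless of the oracle's responses. The $Z$-Game is the same game with only operations (1) and (2) allowed, and $Z(G)$ (the zero forcing number) is the minimum number of tokens needed there to fill all vertices. *)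

theory Defs
  imports Main
begin

text \<open>A graph is given by a vertex set V and an adjacency relation E
(assumed symmetric and irreflexive where relevant).\<close>

definition force_in :: "'a set \<Rightarrow> ('a \<Rightarrow> 'a \<Rightarrow> bool) \<Rightarrow> 'a set \<Rightarrow> 'a \<Rightarrow> bool" where
  "force_in H E F w \<longleftrightarrow>
     (\<exists>u. u \<in> F \<and> u \<in> H \<and> w \<in> H \<and> w \<notin> F \<and> E u w \<and>
          (\<forall>x\<in>H. E u x \<and> x \<notin> F \<longrightarrow> x = w))"

definition fill_steps :: "'a set \<Rightarrow> ('a \<Rightarrow> 'a \<Rightarrow> bool) \<Rightarrow> 'a set \<Rightarrow> 'a set \<Rightarrow> bool" where
  "fill_steps H E = (\<lambda>F F'. \<exists>w. force_in H E F w \<and> F' = insert w F)\<^sup>*\<^sup>*"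

definition unfilled_components :: "'a set \<Rightarrow> ('a \<Rightarrow> 'a \<Rightarrow> bool) \<Rightarrow> 'a set \<Rightarrow> 'a set set" where
  "unfilled_components V E F =
     {C. \<exists>v\<in>V - F. C = {u. (\<lambda>x y. E x y \<and> x \<in> V - F \<and> y \<in> V - F)\<^sup>*\<^sup>* v u}}"

text \<open>game_win V E qo F t: from filled set F, with t tokens left, the player can
guarantee that all vertices get filled.  qo = None is the Z-Game (operations (1),(2));
qo = Some q is the Z_q-Game (operations (1),(2),(3)).\<close>
inductive game_win :: "'a set \<Rightarrow> ('a \<Rightarrow> 'a \<Rightarrow> bool) \<Rightarrow> nat option \<Rightarrow> 'a set \<Rightarrow> nat \<Rightarrow> bool"
  for V E qo where
  finished: "F = V \<Longrightarrow> game_win V E qo F t"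
| token: "v \<in> V \<Longrightarrow> v \<notin> F \<Longrightarrow> game_win V E qo (insert v F) t \<Longrightarrow> game_win V E qo F (Suc t)"
| force: "force_in V E F w \<Longrightarrow> game_win V E qo (insert w F) t \<Longrightarrow> game_win V E qo F t"
| adversary: "qo = Some q \<Longrightarrow> S \<subseteq> unfilled_components V E F \<Longrightarrow> card S \<ge> q + 1 \<Longrightarrow>
           (\<forall>R. R \<subseteq> S \<and> R \<noteq> {} \<longrightarrow>
               (\<exists>F'. fill_steps (F \<union> \<Union>R) E F F' \<and> game_win V E qo F' t)) \<Longrightarrow>
           game_win V E qo F t"

definition zero_forcing_number :: "'a set \<Rightarrow> ('a \<Rightarrow> 'a \<Rightarrow> bool) \<Rightarrow> nat" where
  "zero_forcing_number V E = (LEAST t. game_win V E None {} t)"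

definition Zq :: "nat \<Rightarrow> 'a set \<Rightarrow> ('a \<Rightarrow> 'a \<Rightarrow> bool) \<Rightarrow> nat" where
  "Zq q V E = (LEAST t. game_win V E (Some q) {} t)"

text \<open>The tree T_k on vertices {0..3k+3}: vertex 0 is the identified leaf; for
i \<le> k, copy i of K_{1,3} has centre 3i+1 and other leaves 3i+2, 3i+3.\<close>
definition star_tree_adj :: "nat \<Rightarrow> nat \<Rightarrow> nat \<Rightarrow> bool" where
  "star_tree_adj k x y \<longleftrightarrow>
     (\<exists>i\<le>k. (x = 0 \<and> y = 3*i+1) \<or> (x = 3*i+1 \<and> y = 0)
          \<or> (x = 3*i+1 \<and> y = 3*i+2) \<or> (x = 3*i+2 \<and> y = 3*i+1)
          \<or> (x = 3*i+1 \<and> y = 3*i+3) \<or> (x = 3*i+3 \<and> y = 3*i+1))"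

end

theory Submission
  imports Defs
begin

text \<open>
  Upper bounds: tokens on one outer leaf of every star force all centres; with one more token
  on a second leaf of some star, that star's centre forces the hub 0 and then every centre
  forces its remaining leaf.  In the \<open>Z\<^sub>k\<close>-game the \<open>k + 1\<close> unfilled leaves are
  \<open>k + 1\<close> singleton components; whichever the oracle returns is forced by its centre inside
  the returned subgraph (the hub is not in it), and the play finishes as before.

  Lower bounds: call a star touched once one of its outer leaves is filled.  Such a leaf can
  only be forced by its centre, after its sibling leaf is filled, so forcing never touches a new
  star, each token touches at most one, and at the end all \<open>k + 1\<close> stars are touched.  In
  the \<open>Z\<close>-game with \<open>k + 1\<close> tokens every token must touch a new star, so the hub and
  second leaves stay unfilled, and from such a configuration only centres can be forced.  In
  the \<open>Z\<^sub>k\<close>-game with \<open>k\<close> tokens the oracle withholds every offered singleton leaf whose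
  unfilled sibling was not offered; the rest cannot touch a new star.  If all \<open>k + 1\<close>
  offered components are of the withheld kind, a counting argument shows that no star is
  touched yet, and returning one of them touches a single star.
\<close>

lemma fill_steps_trans [trans]:
  "fill_steps H E F G \<Longrightarrow> fill_steps H E G F' \<Longrightarrow> fill_steps H E F F'"
  unfolding fill_steps_def by (rule rtranclp_trans)

lemma fill_steps_subset: "fill_steps H E F F' \<Longrightarrow> F' \<subseteq> F \<union> H"
  unfolding fill_steps_def
  by (induction rule: rtranclp_induct) (auto simp: force_in_def)

lemma fill_steps_from_empty: "fill_steps H E {} F' \<Longrightarrow> F' = {}"
  unfolding fill_steps_def
  by (induction rule: rtranclp_induct) (auto simp: force_in_def)

lemma fill_steps_union:
  assumes "finite J" "F \<subseteq> H" "J \<subseteq> H"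
    and "\<And>w. w \<in> J \<Longrightarrow> \<exists>u\<in>F. E u w \<and> (\<forall>x\<in>H. E u x \<longrightarrow> x \<in> F \<or> x = w)"
  shows "fill_steps H E F (F \<union> J)"
  using assms(1,3,4)
proof (induction J rule: finite_induct)
  case empty
  show ?case by (simp add: fill_steps_def)
next
  case (insert w J)
  have IH: "fill_steps H E F (F \<union> J)"
    using insert.prems by (intro insert.IH) auto
  show ?case
  proof (cases "w \<in> F \<union> J")
    case True
    with IH show ?thesis by (simp add: insert_absorb)
  next
    case False
    obtain u where "u \<in> F" "E u w" "\<forall>x\<in>H. E u x \<longrightarrow> x \<in> F \<or> x = w"
      using insert.prems(2) by blast
    with False insert.prems(1) assms(2) have "force_in H E (F \<union> J) w"
      unfolding force_in_def by blast
    hence "fill_steps H E (F \<union> J) (F \<union> insert w J)"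
      unfolding fill_steps_def by (intro r_into_rtranclp) auto
    with IH show ?thesis by (rule fill_steps_trans)
  qed
qed

lemma game_win_fill_steps:
  "fill_steps V E F G \<Longrightarrow> game_win V E qo G t \<Longrightarrow> game_win V E qo F t"
  unfolding fill_steps_def
  by (induction rule: converse_rtranclp_induct) (auto intro: game_win.force)

lemma game_win_tokens:
  assumes "finite X" "X \<subseteq> V" "X \<inter> F = {}" "game_win V E qo (F \<union> X) t"
  shows "game_win V E qo F (t + card X)"
  using assms
proof (induction X arbitrary: F rule: finite_induct)
  case empty
  then show ?case by simp
next
  case (insert x X)
  have "game_win V E qo (insert x F) (t + card X)"
    using insert by (intro insert.IH) auto
  with insert.prems have "game_win V E qo F (Suc (t + card X))"
    by (intro game_win.token) auto
  with insert.hyps show ?case by simp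
qed

lemma force_in_pendant:
  assumes "force_in H E G x" and "\<And>z. E z x \<Longrightarrow> z = u"
  shows "u \<in> G" and "\<And>y. y \<in> H \<Longrightarrow> E u y \<Longrightarrow> y \<notin> G \<Longrightarrow> y = x"
  using assms unfolding force_in_def by blast+

lemma unfilled_component_subset:
  "C \<in> unfilled_components V E F \<Longrightarrow> C \<subseteq> V - F"
proof
  fix u assume "C \<in> unfilled_components V E F" "u \<in> C"
  then obtain v where "(\<lambda>x y. E x y \<and> x \<in> V - F \<and> y \<in> V - F)\<^sup>*\<^sup>* v u"
    and "v \<in> V - F"
    unfolding unfilled_components_def by blast
  then show "u \<in> V - F" by (induction rule: rtranclp_induct) auto
qed

lemma unfilled_component_closed:
  "C \<in> unfilled_components V E F \<Longrightarrow> x \<in> C \<Longrightarrow> y \<in> V - F \<Longrightarrow> E x y \<Longrightarrow> y \<in> C"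
  using unfilled_component_subset[of C V E F]
  unfolding unfilled_components_def by (auto intro: rtranclp.rtrancl_into_rtrancl)

lemma unfilled_component_singleton:
  assumes sym: "\<And>x y. E x y \<Longrightarrow> E y x"
    and C: "C \<in> unfilled_components V E F" "w \<in> C"
    and isolated: "\<And>y. E w y \<Longrightarrow> y \<notin> V - F"
  shows "C = {w}"
proof -
  let ?r = "\<lambda>x y. E x y \<and> x \<in> V - F \<and> y \<in> V - F"
  obtain v where C_def: "C = {u. ?r\<^sup>*\<^sup>* v u}"
    using C(1) unfolding unfilled_components_def by blast
  have "symp ?r" using sym by (auto intro: sympI)
  hence w_reaches_v: "?r\<^sup>*\<^sup>* w v" using C(2) C_def by (auto intro: symp_rtranclp sympD)
  have "u = w" if "?r\<^sup>*\<^sup>* w u" for u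
    using that by (induction rule: rtranclp_induct) (use isolated in auto)
  with w_reaches_v C_def C(2) show ?thesis by (auto intro: rtranclp_trans)
qed

lemma singleton_unfilled_component:
  assumes "w \<in> V - F" and "\<And>y. E w y \<Longrightarrow> y \<notin> V - F"
  shows "{w} \<in> unfilled_components V E F"
proof -
  have "u = w" if "(\<lambda>x y. E x y \<and> x \<in> V - F \<and> y \<in> V - F)\<^sup>*\<^sup>* w u" for u
    using that by (induction rule: rtranclp_induct) (use assms in auto)
  with assms(1) show ?thesis
    unfolding unfilled_components_def by blast
qed

definition star_leaf :: "nat \<Rightarrow> nat \<Rightarrow> bool" where
  "star_leaf i x \<longleftrightarrow> x = 3*i+2 \<or> x = 3*i+3"

lemma star_leaf_index: "star_leaf i x \<Longrightarrow> i = (x - 2) div 3"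
  unfolding star_leaf_def by auto

lemma star_leaf_nonzero: "star_leaf i x \<Longrightarrow> x \<noteq> 0"
  unfolding star_leaf_def by auto

lemma star_leaf_sibling:
  "star_leaf i x \<Longrightarrow> \<exists>y. star_leaf i y \<and> y \<noteq> x \<and> (\<forall>z. star_leaf i z \<longrightarrow> z = x \<or> z = y)"
  unfolding star_leaf_def by (elim disjE) auto

lemma star_leaf_other:
  "star_leaf i x \<Longrightarrow> star_leaf i y \<Longrightarrow> x \<noteq> y \<Longrightarrow> star_leaf i z \<Longrightarrow> z = x \<or> z = y"
  unfolding star_leaf_def by auto

lemma star_leaf_vertex: "star_leaf i x \<Longrightarrow> x < 3*k+4 \<longleftrightarrow> i \<le> k"
  unfolding star_leaf_def by auto

lemma star_tree_vertex_cases: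
  assumes "v < 3*k+4"
  obtains "v = 0" | i where "i \<le> k" "v = 3*i+1" | i where "i \<le> k" "star_leaf i v"
proof (cases "v = 0")
  case False
  define i where "i = (v - 1) div 3"
  have "i \<le> k" using assms False unfolding i_def by linarith
  moreover have "v = 3*i+1 \<or> star_leaf i v"
    using False unfolding i_def star_leaf_def by presburger
  ultimately show ?thesis using that by blast
qed

lemma star_tree_adj_sym: "star_tree_adj k x y \<longleftrightarrow> star_tree_adj k y x"
  unfolding star_tree_adj_def by blast

lemma star_tree_adj_hub: "star_tree_adj k 0 x \<longleftrightarrow> (\<exists>i\<le>k. x = 3*i+1)"
  unfolding star_tree_adj_def by auto

lemma star_tree_adj_centre:
  "i \<le> k \<Longrightarrow> star_tree_adj k (3*i+1) x \<longleftrightarrow> x = 0 \<or> star_leaf i x"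
  unfolding star_tree_adj_def star_leaf_def by auto presburger+

lemma star_tree_adj_leaf:
  "star_leaf i x \<Longrightarrow> star_tree_adj k x z \<longleftrightarrow> i \<le> k \<and> z = 3*i+1"
  unfolding star_tree_adj_def star_leaf_def by auto presburger+

definition touched_stars :: "nat \<Rightarrow> nat set \<Rightarrow> nat set" where
  "touched_stars k F = {i. i \<le> k \<and> (\<exists>x\<in>F. star_leaf i x)}"

lemma touched_stars_subset: "touched_stars k F \<subseteq> {..k}"
  unfolding touched_stars_def by auto

lemma finite_touched_stars: "finite (touched_stars k F)"
  using touched_stars_subset finite_subset by blast

lemma touched_stars_mono: "F \<subseteq> G \<Longrightarrow> touched_stars k F \<subseteq> touched_stars k G"
  unfolding touched_stars_def by auto

lemma touched_stars_insert:
  "touched_stars k (insert v F) = touched_stars k F \<union> {i. i \<le> k \<and> star_leaf i v}"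
  unfolding touched_stars_def by auto

lemma card_touched_stars_insert:
  "card (touched_stars k (insert v F)) \<le> card (touched_stars k F) + 1"
proof -
  have "{i. i \<le> k \<and> star_leaf i v} \<subseteq> {(v - 2) div 3}"
    using star_leaf_index by blast
  hence "card {i. i \<le> k \<and> star_leaf i v} \<le> 1"
    using card_mono[of "{(v - 2) div 3}"] by fastforce
  moreover have "card (touched_stars k F \<union> {i. i \<le> k \<and> star_leaf i v})
      \<le> card (touched_stars k F) + card {i. i \<le> k \<and> star_leaf i v}"
    by (rule card_Un_le)
  ultimately show ?thesis unfolding touched_stars_insert by linarith
qed

lemma touched_stars_all: "touched_stars k {..<3*k+4} = {..k}"
proof -
  have "star_leaf i (3*i+2)" for i by (simp add: star_leaf_def)
  thus ?thesis unfolding touched_stars_def by force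
qed

lemma force_in_leaf:
  assumes "force_in H (star_tree_adj k) G x" "star_leaf i x"
  shows "i \<le> k" "3*i+1 \<in> G" "\<And>y. y \<in> H \<Longrightarrow> star_tree_adj k (3*i+1) y \<Longrightarrow> y \<notin> G \<Longrightarrow> y = x"
proof -
  obtain u where "u \<in> G" "star_tree_adj k u x"
    using assms(1) unfolding force_in_def by blast
  thus "i \<le> k" using star_tree_adj_leaf[OF assms(2)] star_tree_adj_sym by blast
  have "z = 3*i+1" if "star_tree_adj k z x" for z
    using that star_tree_adj_leaf[OF assms(2)] star_tree_adj_sym by blast
  thus "3*i+1 \<in> G" "\<And>y. y \<in> H \<Longrightarrow> star_tree_adj k (3*i+1) y \<Longrightarrow> y \<notin> G \<Longrightarrow> y = x"
    using force_in_pendant[OF assms(1)] by blast+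
qed

lemma force_in_leaf_sibling:
  assumes "force_in H (star_tree_adj k) G x" "star_leaf i x" "star_leaf i y" "y \<noteq> x" "y \<in> H"
  shows "y \<in> G"
  using force_in_leaf[OF assms(1,2)] assms(3-5) star_tree_adj_centre by blast

lemma touched_stars_force_in:
  assumes "force_in H (star_tree_adj k) G w"
    and "\<And>i y. star_leaf i w \<Longrightarrow> star_leaf i y \<Longrightarrow> y \<in> G \<union> H"
  shows "touched_stars k (insert w G) = touched_stars k G"
proof -
  have "i \<in> touched_stars k G" if i: "i \<le> k" "star_leaf i w" for i
  proof -
    obtain y where y: "star_leaf i y" "y \<noteq> w" using star_leaf_sibling[OF i(2)] by blast
    with assms(2) i(2) have "y \<in> G \<union> H" by blast
    with force_in_leaf_sibling[OF assms(1) i(2) y] have "y \<in> G" by blast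
    with y(1) i(1) show ?thesis unfolding touched_stars_def by blast
  qed
  thus ?thesis unfolding touched_stars_insert by blast
qed

lemma touched_stars_fill_steps:
  assumes "fill_steps H (star_tree_adj k) F F'"
    and closed: "\<And>i x y. x \<in> H - F \<Longrightarrow> star_leaf i x \<Longrightarrow> star_leaf i y \<Longrightarrow> y \<in> F \<union> H"
  shows "touched_stars k F' = touched_stars k F"
proof -
  have "F \<subseteq> F' \<and> touched_stars k F' = touched_stars k F"
    using assms(1) unfolding fill_steps_def
  proof (induction rule: rtranclp_induct)
    case (step G G')
    then obtain w where w: "force_in H (star_tree_adj k) G w" "G' = insert w G" by blast
    hence "w \<in> H - F" using step.IH unfolding force_in_def by blast
    hence "\<And>i y. star_leaf i w \<Longrightarrow> star_leaf i y \<Longrightarrow> y \<in> G \<union> H"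
      using closed step.IH by blast
    thus ?case using touched_stars_force_in[OF w(1)] w(2) step.IH by blast
  qed simp
  thus ?thesis by blast
qed

text \<open>From such a configuration only centres can ever be forced.\<close>

definition leaf_sparse :: "nat set \<Rightarrow> bool" where
  "leaf_sparse F \<longleftrightarrow> 0 \<notin> F \<and> (\<forall>i x y. star_leaf i x \<longrightarrow> star_leaf i y \<longrightarrow> x \<in> F \<longrightarrow> y \<in> F \<longrightarrow> x = y)"

lemma force_in_leaf_sparse:
  assumes force: "force_in {..<3*k+4} (star_tree_adj k) F w" and sparse: "leaf_sparse F"
  shows "leaf_sparse (insert w F)"
proof -
  have not_leaf: "\<not> star_leaf i w" for i
  proof
    assume leaf: "star_leaf i w"
    hence "i \<le> k" using force_in_leaf(1)[OF force] by blast
    hence "0 = w"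
      using force_in_leaf(3)[OF force leaf, of 0] sparse star_tree_adj_centre
      unfolding leaf_sparse_def by simp
    with leaf show False using star_leaf_nonzero by blast
  qed
  have "w \<noteq> 0"
  proof
    assume "w = 0"
    then obtain u where u: "u \<in> F" "star_tree_adj k u 0"
      "\<forall>x<3*k+4. star_tree_adj k u x \<and> x \<notin> F \<longrightarrow> x = 0"
      using force unfolding force_in_def by auto
    then obtain j where j: "j \<le> k" "u = 3*j+1"
      using star_tree_adj_hub star_tree_adj_sym by blast
    have "3*j+2 \<in> F" "3*j+3 \<in> F"
      using u(3)[rule_format, of "3*j+2"] u(3)[rule_format, of "3*j+3"] j
        star_tree_adj_centre[OF j(1)] by (auto simp: star_leaf_def)
    thus False using sparse unfolding leaf_sparse_def star_leaf_def by fastforce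
  qed
  with sparse not_leaf show ?thesis unfolding leaf_sparse_def by blast
qed

lemma leaf_sparse_insert_untouched:
  assumes sparse: "leaf_sparse F" and v: "star_leaf i v" "i \<le> k" "i \<notin> touched_stars k F"
  shows "leaf_sparse (insert v F)"
proof -
  have sibling_unfilled: "y \<notin> F" if "star_leaf j v" "star_leaf j y" for j y
  proof -
    have "j = i" using star_leaf_index[OF that(1)] star_leaf_index[OF v(1)] by simp
    with that(2) v(2,3) show ?thesis unfolding touched_stars_def by blast
  qed
  have "v \<noteq> 0" using star_leaf_nonzero[OF v(1)] by blast
  moreover have "x = y"
    if "star_leaf j x" "star_leaf j y" "x \<in> insert v F" "y \<in> insert v F" for j x y
    using that sibling_unfilled sparse unfolding leaf_sparse_def by blast
  ultimately show ?thesis using sparse unfolding leaf_sparse_def by blast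
qed

lemma zero_forcing_game_invariant:
  "game_win {..<3*k+4} (star_tree_adj k) None F t \<Longrightarrow>
   t + card (touched_stars k F) \<le> k + 1 \<Longrightarrow>
   (t + card (touched_stars k F) = k + 1 \<Longrightarrow> leaf_sparse F) \<Longrightarrow> False"
proof (induction rule: game_win.induct)
  case (finished F t)
  then show ?case by (simp add: touched_stars_all leaf_sparse_def)
next
  case (token v F t)
  let ?c = "card (touched_stars k F)" and ?c' = "card (touched_stars k (insert v F))"
  have "?c' \<le> ?c + 1" by (rule card_touched_stars_insert)
  moreover have "?c \<le> ?c'"
    by (intro card_mono finite_touched_stars touched_stars_mono) blast
  ultimately have grow: "t + ?c' = k + 1 \<Longrightarrow> ?c' = ?c + 1 \<and> Suc t + ?c = k + 1"
    using token.prems(1) by linarith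
  show False
  proof (rule token.IH)
    show "t + ?c' \<le> k + 1" using \<open>?c' \<le> ?c + 1\<close> token.prems(1) by linarith
  next
    assume tight: "t + ?c' = k + 1"
    hence "touched_stars k (insert v F) \<noteq> touched_stars k F" using grow by auto
    then obtain i where "i \<le> k" "star_leaf i v" "i \<notin> touched_stars k F"
      unfolding touched_stars_insert by blast
    with grow[OF tight] token.prems(2) show "leaf_sparse (insert v F)"
      using leaf_sparse_insert_untouched by presburger
  qed
next
  case (force F w t)
  have "touched_stars k (insert w F) = touched_stars k F"
    by (rule touched_stars_force_in[OF force.hyps(1)])
       (use star_leaf_vertex force_in_leaf(1)[OF force.hyps(1)] in blast)
  with force.prems force_in_leaf_sparse[OF force.hyps(1)] show False
    by (intro force.IH) auto
qed simp

text \<open>The offered components the oracle withholds: returning \<open>{x}\<close> while the sibling of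
  \<open>x\<close> stays unfilled outside the returned subgraph would let its centre force \<open>x\<close>.\<close>

definition unpaired_leaves :: "nat \<Rightarrow> nat set \<Rightarrow> nat set set \<Rightarrow> nat set set" where
  "unpaired_leaves k F S =
     {{x} | x. \<exists>i\<le>k. \<exists>y. star_leaf i x \<and> star_leaf i y \<and> x \<noteq> y \<and> y \<notin> F \<and> {y} \<notin> S}"

lemma card_unpaired_leaves_bound:
  assumes S: "S \<subseteq> unfilled_components {..<3*k+4} (star_tree_adj k) F"
    and unpaired: "S \<subseteq> unpaired_leaves k F S"
  shows "card S + card (touched_stars k F) \<le> k + 1"
proof -
  define star_of where "star_of C = (the_elem C - 2) div 3" for C :: "nat set"
  have unpaired_D: "\<exists>i x y. i \<le> k \<and> star_leaf i x \<and> star_leaf i y \<and> x \<noteq> y \<and> C = {x} \<and>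
      x \<notin> F \<and> y \<notin> F \<and> {y} \<notin> S \<and> star_of C = i" if "C \<in> S" for C
  proof -
    obtain i x y where "i \<le> k" "star_leaf i x" "star_leaf i y" "x \<noteq> y" "C = {x}" "y \<notin> F" "{y} \<notin> S"
      using unpaired \<open>C \<in> S\<close> unfolding unpaired_leaves_def by blast
    moreover have "x \<notin> F" using unfilled_component_subset S \<open>C \<in> S\<close> \<open>C = {x}\<close> by blast
    ultimately show ?thesis using star_leaf_index unfolding star_of_def by auto
  qed
  have "inj_on star_of S"
  proof
    fix C D assume "C \<in> S" "D \<in> S" "star_of C = star_of D"
    obtain i x y where "star_leaf i x" "star_leaf i y" "x \<noteq> y" "C = {x}" "{y} \<notin> S"
      "star_of C = i"
      using unpaired_D[OF \<open>C \<in> S\<close>] by blast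
    moreover obtain x' where "star_leaf i x'" "D = {x'}"
      using unpaired_D[OF \<open>D \<in> S\<close>] \<open>star_of C = star_of D\<close> \<open>star_of C = i\<close> by metis
    ultimately show "C = D" using star_leaf_other \<open>D \<in> S\<close> by blast
  qed
  moreover have "star_of ` S \<subseteq> {..k} - touched_stars k F"
  proof
    fix i assume "i \<in> star_of ` S"
    then obtain x y where "i \<le> k" "star_leaf i x" "star_leaf i y" "x \<noteq> y" "x \<notin> F" "y \<notin> F"
      using unpaired_D by blast
    thus "i \<in> {..k} - touched_stars k F"
      using star_leaf_other unfolding touched_stars_def by blast
  qed
  ultimately have "card S \<le> card ({..k} - touched_stars k F)"
    by (intro card_inj_on_le) auto
  also have "\<dots> = k + 1 - card (touched_stars k F)"
    using touched_stars_subset by (simp add: card_Diff_subset finite_touched_stars)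
  finally have "card S \<le> k + 1 - card (touched_stars k F)" .
  moreover have "card (touched_stars k F) \<le> k + 1"
    using card_mono[OF finite_atMost touched_stars_subset[of k F]] by simp
  ultimately show ?thesis by linarith
qed

lemma paired_components_sibling_closed:
  assumes S: "S \<subseteq> unfilled_components {..<3*k+4} (star_tree_adj k) F"
    and x: "x \<in> \<Union>(S - unpaired_leaves k F S)" and leaves: "star_leaf i x" "star_leaf i y"
    and "y \<notin> F"
  shows "y \<in> \<Union>(S - unpaired_leaves k F S)"
proof (cases "y = x")
  case False
  obtain C where C: "C \<in> S" "C \<notin> unpaired_leaves k F S" "x \<in> C" using x by blast
  have component: "C \<in> unfilled_components {..<3*k+4} (star_tree_adj k) F" using S C(1) by blast
  hence "x \<in> {..<3*k+4} - F" using unfilled_component_subset C(3) by blast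
  hence "i \<le> k" using star_leaf_vertex[OF leaves(1)] by simp
  hence y: "y \<in> {..<3*k+4} - F" using star_leaf_vertex[OF leaves(2)] \<open>y \<notin> F\<close> by simp
  show ?thesis
  proof (cases "3*i+1 \<in> F")
    case True
    have isolated: "v \<notin> {..<3*k+4} - F" if "star_leaf i z" "star_tree_adj k z v" for z v
      using that(2) True by (simp add: star_tree_adj_leaf[OF that(1)])
    have sym: "\<And>a b. star_tree_adj k a b \<Longrightarrow> star_tree_adj k b a"
      using star_tree_adj_sym by blast
    have "C = {x}"
      by (rule unfilled_component_singleton[OF sym component C(3) isolated[OF leaves(1)]])
    have "{y} \<in> S"
    proof (rule ccontr)
      assume "{y} \<notin> S"
      with \<open>C = {x}\<close> \<open>i \<le> k\<close> leaves False \<open>y \<notin> F\<close> have "C \<in> unpaired_leaves k F S"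
        unfolding unpaired_leaves_def by blast
      with C(2) show False by blast
    qed
    moreover have "{y} \<notin> unpaired_leaves k F S"
    proof
      assume "{y} \<in> unpaired_leaves k F S"
      then obtain j y' where "star_leaf j y" "star_leaf j y'" "y' \<noteq> y" "{y'} \<notin> S"
        unfolding unpaired_leaves_def by blast
      moreover have "j = i"
        using star_leaf_index[OF \<open>star_leaf j y\<close>] star_leaf_index[OF leaves(2)] by simp
      ultimately have "y' = x" using star_leaf_other[OF leaves, of y'] False by auto
      with \<open>{y'} \<notin> S\<close> C(1) \<open>C = {x}\<close> show False by blast
    qed
    ultimately show ?thesis by blast
  next
    case False
    hence centre: "3*i+1 \<in> {..<3*k+4} - F" using \<open>i \<le> k\<close> by simp
    have "star_tree_adj k x (3*i+1)" using star_tree_adj_leaf[OF leaves(1)] \<open>i \<le> k\<close> by simp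
    with component C(3) centre have "3*i+1 \<in> C" by (rule unfilled_component_closed)
    moreover have "star_tree_adj k (3*i+1) y" using star_tree_adj_centre[OF \<open>i \<le> k\<close>] leaves(2) by simp
    ultimately have "y \<in> C" using unfilled_component_closed[OF component _ y] by blast
    with C show ?thesis by blast
  qed
qed (use x in simp)

lemma oracle_withholds_new_stars:
  assumes S: "S \<subseteq> unfilled_components {..<3*k+4} (star_tree_adj k) F"
    and card_S: "k + 1 \<le> card S" and "t < k" and budget: "t + card (touched_stars k F) \<le> k"
  shows "\<exists>R\<subseteq>S. R \<noteq> {} \<and>
    (\<forall>F'. fill_steps (F \<union> \<Union>R) (star_tree_adj k) F F' \<longrightarrow> t + card (touched_stars k F') \<le> k)"
proof (cases "S \<subseteq> unpaired_leaves k F S")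
  case False
  let ?R = "S - unpaired_leaves k F S"
  have "touched_stars k F' = touched_stars k F"
    if "fill_steps (F \<union> \<Union>?R) (star_tree_adj k) F F'" for F'
    using that
  proof (rule touched_stars_fill_steps)
    fix i x y assume "x \<in> F \<union> \<Union>?R - F" "star_leaf i x" "star_leaf i y"
    then show "y \<in> F \<union> (F \<union> \<Union>?R)"
      using paired_components_sibling_closed[OF S] by blast
  qed
  moreover have "?R \<subseteq> S" "?R \<noteq> {}" using False by blast+
  ultimately show ?thesis using budget by (intro exI[of _ ?R]) simp
next
  case True
  have "card (touched_stars k F) = 0"
    using card_unpaired_leaves_bound[OF S True] card_S by simp
  hence "touched_stars k F = {}" using finite_touched_stars by simp
  obtain C where "C \<in> S" using card_S by fastforce
  then obtain x where "C = {x}" using True unfolding unpaired_leaves_def by blast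
  have "t + card (touched_stars k F') \<le> k" if "fill_steps (F \<union> \<Union>{C}) (star_tree_adj k) F F'" for F'
  proof -
    have "F' \<subseteq> insert x F" using fill_steps_subset[OF that] \<open>C = {x}\<close> by blast
    hence "card (touched_stars k F') \<le> card (touched_stars k (insert x F))"
      by (intro card_mono finite_touched_stars touched_stars_mono)
    also have "\<dots> \<le> 1"
      using card_touched_stars_insert[of k x F] \<open>touched_stars k F = {}\<close> by simp
    finally show ?thesis using \<open>t < k\<close> by linarith
  qed
  with \<open>C \<in> S\<close> show ?thesis by (intro exI[of _ "{C}"]) simp
qed

text \<open>The clause for \<open>t = k\<close> handles oracle moves before the first token: with nothing
  filled, nothing can be forced in any returned subgraph.\<close>

lemma Zq_game_invariant:
  "game_win {..<3*k+4} (star_tree_adj k) (Some k) F t \<Longrightarrow>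
   t + card (touched_stars k F) \<le> k \<Longrightarrow> (t = k \<Longrightarrow> F = {}) \<Longrightarrow> False"
proof (induction rule: game_win.induct)
  case (finished F t)
  then show ?case by (simp add: touched_stars_all)
next
  case (token v F t)
  have "card (touched_stars k (insert v F)) \<le> card (touched_stars k F) + 1"
    by (rule card_touched_stars_insert)
  with token.prems(1) show False by (intro token.IH) auto
next
  case (force F w t)
  have "touched_stars k (insert w F) = touched_stars k F"
    by (rule touched_stars_force_in[OF force.hyps(1)])
       (use star_leaf_vertex force_in_leaf(1)[OF force.hyps(1)] in blast)
  moreover have "F \<noteq> {}" using force.hyps(1) unfolding force_in_def by blast
  ultimately show False using force.prems by (intro force.IH) auto
next
  case (adversary q S F t)
  then have "q = k" "S \<noteq> {}" by auto
  show False
  proof (cases "t = k")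
    case True
    with adversary.prems(2) have "F = {}" .
    obtain F' where "fill_steps (F \<union> \<Union>S) (star_tree_adj k) F F'"
      and IH: "t + card (touched_stars k F') \<le> k \<longrightarrow> (t = k \<longrightarrow> F' = {}) \<longrightarrow> False"
      using adversary.IH \<open>S \<noteq> {}\<close> by blast
    with \<open>F = {}\<close> have "F' = {}" using fill_steps_from_empty by blast
    with IH \<open>F = {}\<close> show False using adversary.prems(1) by simp
  next
    case False
    with adversary.prems(1) have "t < k" by simp
    with oracle_withholds_new_stars[OF adversary.hyps(2)] adversary.hyps(3) adversary.prems(1)
      \<open>q = k\<close> obtain R where "R \<subseteq> S" "R \<noteq> {}"
      "\<forall>F'. fill_steps (F \<union> \<Union>R) (star_tree_adj k) F F' \<longrightarrow> t + card (touched_stars k F') \<le> k"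
      by blast
    with adversary.IH False show False by blast
  qed
qed

lemma fill_centres:
  assumes "(\<lambda>i. 3*i+2) ` {..k} \<subseteq> F" "F \<subseteq> {..<3*k+4}"
  shows "fill_steps {..<3*k+4} (star_tree_adj k) F (F \<union> (\<lambda>i. 3*i+1) ` {..k})"
proof (rule fill_steps_union)
  fix w assume "w \<in> (\<lambda>i. 3*i+1) ` {..k}"
  then obtain i where i: "i \<le> k" "w = 3*i+1" by blast
  have leaf: "star_leaf i (3*i+2)" by (simp add: star_leaf_def)
  show "\<exists>u\<in>F. star_tree_adj k u w \<and> (\<forall>x\<in>{..<3*k+4}. star_tree_adj k u x \<longrightarrow> x \<in> F \<or> x = w)"
    using assms(1) i star_tree_adj_leaf[OF leaf] by (intro bexI[of _ "3*i+2"]) auto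
qed (use assms(2) in auto)

lemma fill_from_filled_star:
  assumes j: "j \<le> k" "3*j+3 \<in> F"
    and filled: "(\<lambda>i. 3*i+2) ` {..k} \<subseteq> F" "(\<lambda>i. 3*i+1) ` {..k} \<subseteq> F"
    and F: "F \<subseteq> {..<3*k+4}"
  shows "fill_steps {..<3*k+4} (star_tree_adj k) F {..<3*k+4}"
proof -
  let ?B = "(\<lambda>i. 3*i+3) ` {..k}"
  have "fill_steps {..<3*k+4} (star_tree_adj k) F (F \<union> {0})"
  proof (rule fill_steps_union)
    show "\<exists>u\<in>F. star_tree_adj k u w \<and> (\<forall>x\<in>{..<3*k+4}. star_tree_adj k u x \<longrightarrow> x \<in> F \<or> x = w)"
      if "w \<in> {0}" for w
      using that j filled star_tree_adj_centre[OF j(1)]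
      by (intro bexI[of _ "3*j+1"]) (auto simp: star_leaf_def)
  qed (use F in auto)
  also have "fill_steps {..<3*k+4} (star_tree_adj k) (F \<union> {0}) (F \<union> {0} \<union> ?B)"
  proof (rule fill_steps_union)
    fix w assume "w \<in> ?B"
    then obtain i where i: "i \<le> k" "w = 3*i+3" by blast
    show "\<exists>u\<in>F \<union> {0}. star_tree_adj k u w \<and>
        (\<forall>x\<in>{..<3*k+4}. star_tree_adj k u x \<longrightarrow> x \<in> F \<union> {0} \<or> x = w)"
      using i filled star_tree_adj_centre[OF i(1)]
      by (intro bexI[of _ "3*i+1"]) (auto simp: star_leaf_def)
  qed (use F in auto)
  also have "F \<union> {0} \<union> ?B = {..<3*k+4}"
  proof
    show "F \<union> {0} \<union> ?B \<subseteq> {..<3*k+4}" using F by auto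
    show "{..<3*k+4} \<subseteq> F \<union> {0} \<union> ?B"
    proof
      fix v assume "v \<in> {..<3*k+4}"
      then have "v < 3*k+4" by simp
      then show "v \<in> F \<union> {0} \<union> ?B"
        by (cases rule: star_tree_vertex_cases) (use filled in \<open>auto simp: star_leaf_def\<close>)
    qed
  qed
  finally show ?thesis .
qed

lemma zero_forcing_game_upper: "game_win {..<3*k+4} (star_tree_adj k) qo {} (k + 2)"
proof -
  let ?A = "(\<lambda>i. 3*i+2) ` {..k}" and ?C = "(\<lambda>i. 3*i+1) ` {..k}"
  let ?X = "insert 3 ?A"
  have "3 \<notin> ?A" by auto
  hence card_X: "card ?X = k + 2" by (simp add: card_image inj_on_def)
  have X: "?X \<subseteq> {..<3*k+4}" by auto
  have "fill_steps {..<3*k+4} (star_tree_adj k) ?X (?X \<union> ?C)"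
    using X by (intro fill_centres) auto
  also have "fill_steps {..<3*k+4} (star_tree_adj k) (?X \<union> ?C) {..<3*k+4}"
    using X by (intro fill_from_filled_star[of 0]) auto
  finally have "game_win {..<3*k+4} (star_tree_adj k) qo ?X 0"
    by (rule game_win_fill_steps) (rule game_win.finished, rule refl)
  with X have "game_win {..<3*k+4} (star_tree_adj k) qo {} (0 + card ?X)"
    by (intro game_win_tokens) auto
  with card_X show ?thesis by simp
qed

lemma Zq_game_upper: "game_win {..<3*k+4} (star_tree_adj k) (Some k) {} (k + 1)"
proof -
  let ?A = "(\<lambda>i. 3*i+2) ` {..k}" and ?C = "(\<lambda>i. 3*i+1) ` {..k}"
  let ?F = "?A \<union> ?C" and ?S = "(\<lambda>i. {3*i+3}) ` {..k}"
  have A: "?A \<subseteq> {..<3*k+4}" and F: "?F \<subseteq> {..<3*k+4}" by auto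
  have B_unfilled: "3*i+3 \<notin> ?F" for i by auto presburger+
  have S: "?S \<subseteq> unfilled_components {..<3*k+4} (star_tree_adj k) ?F"
  proof
    fix D assume "D \<in> ?S"
    then obtain i where i: "i \<le> k" "D = {3*i+3}" by blast
    have leaf: "star_leaf i (3*i+3)" by (simp add: star_leaf_def)
    show "D \<in> unfilled_components {..<3*k+4} (star_tree_adj k) ?F"
      unfolding i(2) using i(1) B_unfilled star_tree_adj_leaf[OF leaf]
      by (intro singleton_unfilled_component) auto
  qed
  have "game_win {..<3*k+4} (star_tree_adj k) (Some k) ?F 0"
  proof (rule game_win.adversary[OF refl S])
    show "k + 1 \<le> card ?S" by (simp add: card_image inj_on_def)
    show "\<forall>R. R \<subseteq> ?S \<and> R \<noteq> {} \<longrightarrow> (\<exists>F'. fill_steps (?F \<union> \<Union>R) (star_tree_adj k) ?F F' \<and>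
        game_win {..<3*k+4} (star_tree_adj k) (Some k) F' 0)"
    proof (intro allI impI)
      fix R assume R: "R \<subseteq> ?S \<and> R \<noteq> {}"
      then obtain j where j: "j \<le> k" "{3*j+3} \<in> R" by blast
      have "0 \<notin> ?F \<union> \<Union>R" using R by auto
      have "fill_steps (?F \<union> \<Union>R) (star_tree_adj k) ?F (?F \<union> {3*j+3})"
      proof (rule fill_steps_union)
        show "\<exists>u\<in>?F. star_tree_adj k u w \<and> (\<forall>x\<in>?F \<union> \<Union>R. star_tree_adj k u x \<longrightarrow> x \<in> ?F \<or> x = w)"
          if "w \<in> {3*j+3}" for w
          using that j \<open>0 \<notin> ?F \<union> \<Union>R\<close> star_tree_adj_centre[OF j(1)]
          by (intro bexI[of _ "3*j+1"]) (auto simp: star_leaf_def)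
      qed (use j in auto)
      moreover have "fill_steps {..<3*k+4} (star_tree_adj k) (?F \<union> {3*j+3}) {..<3*k+4}"
        using j(1) F by (intro fill_from_filled_star[of j]) auto
      ultimately show "\<exists>F'. fill_steps (?F \<union> \<Union>R) (star_tree_adj k) ?F F' \<and>
          game_win {..<3*k+4} (star_tree_adj k) (Some k) F' 0"
        by (blast intro: game_win_fill_steps game_win.finished)
    qed
  qed
  with fill_centres[OF subset_refl A] have "game_win {..<3*k+4} (star_tree_adj k) (Some k) ?A 0"
    by (rule game_win_fill_steps)
  with A have "game_win {..<3*k+4} (star_tree_adj k) (Some k) {} (0 + card ?A)"
    by (intro game_win_tokens) auto
  then show ?thesis by (simp add: card_image inj_on_def)
qed

theorem proposition2p4:
  fixes k :: nat
  shows "zero_forcing_number {..<3*k+4} (star_tree_adj k) = k + 2 \<and>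
         Zq k {..<3*k+4} (star_tree_adj k) = k + 1"
proof
  have "touched_stars k {} = {}" "leaf_sparse {}"
    by (simp_all add: touched_stars_def leaf_sparse_def)
  show "zero_forcing_number {..<3*k+4} (star_tree_adj k) = k + 2"
    unfolding zero_forcing_number_def
  proof (rule Least_equality)
    fix t assume "game_win {..<3*k+4} (star_tree_adj k) None {} t"
    with zero_forcing_game_invariant \<open>touched_stars k {} = {}\<close> \<open>leaf_sparse {}\<close>
    show "k + 2 \<le> t" by force
  qed (rule zero_forcing_game_upper)
  show "Zq k {..<3*k+4} (star_tree_adj k) = k + 1"
    unfolding Zq_def
  proof (rule Least_equality)
    fix t assume "game_win {..<3*k+4} (star_tree_adj k) (Some k) {} t"
    with Zq_game_invariant \<open>touched_stars k {} = {}\<close> show "k + 1 \<le> t" by force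
  qed (rule Zq_game_upper)
qed

end
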